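(* Let $\alpha>-1$, let $\{\lambda_n\}_{n=0}^\infty$ be a sequence of real numbers, and let $T:\mathbb{R}[x]\to\mathbb{R}[x]$ be the linear operator defined by $T(L_n^{(\alpha)}(x))=\lambda_nL_n^{(\alpha)}(x)$ for all $n\in\mathbb{N}$. Then the symbol of $T$ is $$G_T(x,y)=e^{-xy}\sum_{n=0}^{\infty}a_n y^n L_n^{(\alpha)}(xy+x),\qquad a_n=\sum_{k=0}^{n}(-1)^{n-k}\binom{n}{k}\lambda_k,$$ as an identity of formal power series in $y$ with polynomial coefficients in $x$.
   Context: For $\alpha>-1$, $L_n^{(\alpha)}(x)=\sum_{k=0}^{n}\binom{n+\alpha}{n-k}\frac{(-x)^k}{k!}$, where $\binom{m+\alpha}{j}=\frac{(m+\alpha)\cdots(m+\alpha-j+1)}{j!}$. The symbol of a linear operator $T:\mathbb{R}[x]\to\mathbb{R}[x]$ is the formal power series $G_T(x,y)=\sum_{n=0}^\infty \frac{(-1)^nT(x^n)}{n!}y^n$ (formally, $G_T=T(e^{-xy})$ with $T$ acting in $x$). *)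

theory Defs
  imports "HOL-Computational_Algebra.Computational_Algebra"
begin

definition laguerre :: "nat \<Rightarrow> real \<Rightarrow> real poly" where
  "laguerre n \<alpha> = (\<Sum>k\<le>n. smult (((real n + \<alpha>) gchoose (n - k)) * (-1) ^ k / fact k) (monom 1 k))"

text \<open>Symbol of a linear operator T on R[x]:
  G_T(x,y) = sum_n (-1)^n T(x^n) / n! y^n, a power series in y over R[x].\<close>
definition symbol :: "(real poly \<Rightarrow> real poly) \<Rightarrow> real poly fps" where
  "symbol T = Abs_fps (\<lambda>n. smult ((-1) ^ n / fact n) (T (monom 1 n)))"

text \<open>e^{-xy} as a power series in y over R[x]: coefficient of y^j is (-x)^j / j!.\<close>
definition exp_mxy :: "real poly fps" where
  "exp_mxy = Abs_fps (\<lambda>j. smult ((-1) ^ j / fact j) (monom 1 j))"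

text \<open>Formal sum of a family of power series f n with subdegree (f n) >= n
  (the coefficient of y^m only receives contributions from n <= m).\<close>
definition fps_order_sum :: "(nat \<Rightarrow> 'a::comm_monoid_add fps) \<Rightarrow> 'a fps" where
  "fps_order_sum f = Abs_fps (\<lambda>m. \<Sum>n\<le>m. fps_nth (f n) m)"

text \<open>For p in R[x], p(xy + x) as a polynomial in y with coefficients in R[x].\<close>
definition subst_xy_x :: "real poly \<Rightarrow> real poly poly" where
  "subst_xy_x p = pcompose (map_poly (\<lambda>c. [:c:]) p) [: [:0, 1:], [:0, 1:] :]"

end

theory Submission
  imports Defs
begin

(* Let T act on the Laguerre basis by T L_k = lam_k L_k and put
   a_n = sum_k (-1)^(n-k) (n choose k) lam_k, so that by binomial inversion
   lam_k = sum_n (k choose n) a_n.  Both sides of the claimed identity are then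
   linear combinations, with coefficients a_n, of the symbols of the
   "basis multipliers" L_k |-> (k choose n) L_k, and it suffices to prove the
   theorem for these, i.e. to show that the coefficient of y^m of
   e^(-xy) y^n L_n(xy + x) equals (-1)^m/m! times the image of x^m.

   All identities hold for every real alpha. *)

definition lag_coeff :: "real \<Rightarrow> nat \<Rightarrow> nat \<Rightarrow> real" where
  "lag_coeff \<alpha> n i = ((real n + \<alpha>) gchoose (n - i)) * (-1) ^ i / fact i"

lemma coeff_laguerre: "coeff (laguerre n \<alpha>) i = (if i \<le> n then lag_coeff \<alpha> n i else 0)"
proof -
  have "coeff (laguerre n \<alpha>) i = (\<Sum>k\<le>n. if k = i then lag_coeff \<alpha> n k else 0)"
    unfolding laguerre_def lag_coeff_def coeff_sum coeff_smult coeff_monom by (rule sum.cong) auto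
  then show ?thesis by simp
qed

section \<open>Binomial identities\<close>

lemma sum_atMost_from:
  fixes g :: "nat \<Rightarrow> 'a::comm_monoid_add"
  assumes "p \<le> m"
  shows "(\<Sum>k\<le>m. if p \<le> k then g k else 0) = (\<Sum>j\<le>m - p. g (p + j))"
proof -
  have "(\<Sum>k\<le>m. if p \<le> k then g k else 0) = (\<Sum>k\<in>{p..m}. if p \<le> k then g k else 0)"
    by (rule sum.mono_neutral_right) auto
  also have "\<dots> = (\<Sum>k\<in>{p..m}. g k)" by (intro sum.cong) auto
  also have "\<dots> = (\<Sum>j\<in>{0..m - p}. g (j + p))"
    using assms sum.shift_bounds_cl_nat_ivl[of g 0 p "m - p"] by simp
  finally show ?thesis by (simp add: atLeast0AtMost add.commute)
qed

lemma alternating_binomial_sum: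
  "(\<Sum>j\<le>q. (-1) ^ j * real (q choose j)) = (if q = 0 then 1 else 0)"
  using choose_alternating_sum[of q, where 'a=real] by auto

text \<open>Pascal's rule turns an alternating binomial sum of order \<open>q+1\<close> into one
  of order \<open>q\<close> applied to the forward difference of the summand.\<close>
lemma alternating_sum_Suc:
  fixes f :: "nat \<Rightarrow> real"
  shows "(\<Sum>j\<le>Suc q. (-1) ^ j * real (Suc q choose j) * f j) =
         (\<Sum>j\<le>q. (-1) ^ j * real (q choose j) * (f j - f (Suc j)))"
proof -
  have shifted: "(\<Sum>j\<le>q. (-1) ^ j * real (q choose j) * f j) =
        f 0 - (\<Sum>j\<le>q. (-1) ^ j * real (q choose Suc j) * f (Suc j))"
  proof -
    have "(\<Sum>j\<le>q. (-1) ^ j * real (q choose j) * f j) =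
          (\<Sum>j\<le>Suc q. (-1) ^ j * real (q choose j) * f j)"
      by simp
    also have "\<dots> = f 0 + (\<Sum>j\<le>q. (-1) ^ Suc j * real (q choose Suc j) * f (Suc j))"
      by (subst sum.atMost_Suc_shift) simp
    finally show ?thesis by (simp add: sum_negf[symmetric])
  qed
  have "(\<Sum>j\<le>Suc q. (-1) ^ j * real (Suc q choose j) * f j) =
        f 0 + (\<Sum>j\<le>q. (-1) ^ Suc j * real (Suc q choose Suc j) * f (Suc j))"
    by (subst sum.atMost_Suc_shift) simp
  also have "\<dots> = f 0 - (\<Sum>j\<le>q. (-1) ^ j * real (q choose j) * f (Suc j))
                      - (\<Sum>j\<le>q. (-1) ^ j * real (q choose Suc j) * f (Suc j))"
    by (simp add: sum_negf[symmetric] sum_subtractf[symmetric] algebra_simps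
        sum.distrib[symmetric])
  also have "\<dots> = (\<Sum>j\<le>q. (-1) ^ j * real (q choose j) * (f j - f (Suc j)))"
    using shifted by (simp add: algebra_simps sum_subtractf)
  finally show ?thesis .
qed

lemma alternating_binomial_shift:
  "(\<Sum>j\<le>q. (-1) ^ j * real (q choose j) * real ((p + j) choose n)) =
   (if q \<le> n then (-1) ^ q * real (p choose (n - q)) else 0)"
proof (induction q arbitrary: n)
  case 0
  then show ?case by simp
next
  case (Suc q)
  show ?case
  proof (cases n)
    case 0
    then show ?thesis by (subst alternating_sum_Suc) simp
  next
    case (Suc n')
    have "(\<Sum>j\<le>Suc q. (-1) ^ j * real (Suc q choose j) * real ((p + j) choose n)) =
          - (\<Sum>j\<le>q. (-1) ^ j * real (q choose j) * real ((p + j) choose n'))"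
      by (subst alternating_sum_Suc) (simp add: Suc sum_negf[symmetric] algebra_simps)
    then show ?thesis
      using Suc.IH[of n'] by (simp add: Suc)
  qed
qed

lemma alternating_choose_mult:
  assumes "i \<le> k"
  shows "(\<Sum>n\<le>k. (-1) ^ (n - i) * real (k choose n) * real (n choose i)) =
         (if k = i then 1 else 0)"
proof -
  have "(\<Sum>n\<le>k. (-1) ^ (n - i) * real (k choose n) * real (n choose i)) =
        (\<Sum>n\<in>{i..k}. (-1) ^ (n - i) * real (k choose n) * real (n choose i))"
    by (rule sum.mono_neutral_right) auto
  also have "\<dots> = (\<Sum>j\<in>{0..k - i}. (-1) ^ j * real (k choose (j + i)) * real ((j + i) choose i))"
    using assms sum.shift_bounds_cl_nat_ivl[of
        "\<lambda>n. (-1) ^ (n - i) * real (k choose n) * real (n choose i)" 0 i "k - i"]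
    by simp
  also have "\<dots> = (\<Sum>j\<in>{0..k - i}. real (k choose i) * ((-1) ^ j * real ((k - i) choose j)))"
  proof (intro sum.cong refl)
    fix j assume "j \<in> {0..k - i}"
    then have "(k choose (j + i)) * ((j + i) choose i) = (k choose i) * ((k - i) choose j)"
      using choose_mult[of i "j + i" k] assms by auto
    then show "(-1) ^ j * real (k choose (j + i)) * real ((j + i) choose i) =
               real (k choose i) * ((-1) ^ j * real ((k - i) choose j))"
      by (metis (mono_tags, lifting) mult.assoc mult.left_commute of_nat_mult)
  qed
  also have "\<dots> = real (k choose i) * (if k - i = 0 then 1 else 0)"
    by (simp add: sum_distrib_left[symmetric] alternating_binomial_sum atLeast0AtMost)
  finally show ?thesis using assms by auto
qed

lemma binomial_inversion:
  fixes lam :: "nat \<Rightarrow> real"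
  shows "(\<Sum>n\<le>k. real (k choose n) * (\<Sum>i\<le>n. (-1) ^ (n - i) * real (n choose i) * lam i)) = lam k"
proof -
  have "(\<Sum>n\<le>k. real (k choose n) * (\<Sum>i\<le>n. (-1) ^ (n - i) * real (n choose i) * lam i)) =
        (\<Sum>n\<le>k. \<Sum>i\<le>k. (-1) ^ (n - i) * real (k choose n) * real (n choose i) * lam i)"
  proof (intro sum.cong refl)
    fix n assume "n \<in> {..k}"
    then have "(\<Sum>i\<le>n. (-1) ^ (n - i) * real (n choose i) * lam i) =
               (\<Sum>i\<le>k. (-1) ^ (n - i) * real (n choose i) * lam i)"
      by (intro sum.mono_neutral_left) auto
    then show "real (k choose n) * (\<Sum>i\<le>n. (-1) ^ (n - i) * real (n choose i) * lam i) =
        (\<Sum>i\<le>k. (-1) ^ (n - i) * real (k choose n) * real (n choose i) * lam i)"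
      by (simp add: sum_distrib_left algebra_simps)
  qed
  also have "\<dots> = (\<Sum>i\<le>k. (\<Sum>n\<le>k. (-1) ^ (n - i) * real (k choose n) * real (n choose i)) * lam i)"
    by (subst sum.swap) (simp add: sum_distrib_right)
  also have "\<dots> = (\<Sum>i\<le>k. if i = k then lam i else 0)"
    by (intro sum.cong refl) (auto simp: alternating_choose_mult)
  finally show ?thesis by simp
qed

lemma gbinomial_laguerre_revision:
  assumes "p \<le> k" "k \<le> m"
  shows "((real m + \<alpha>) gchoose (m - k)) * ((real k + \<alpha>) gchoose (k - p)) =
         ((real m + \<alpha>) gchoose (m - p)) * real ((m - p) choose (m - k))"
proof -
  have "m - k \<le> m - p" using assms by simp
  note revision = gbinomial_trinomial_revision[OF this, of "real m + \<alpha>"]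
  have "real m + \<alpha> - of_nat (m - k) = real k + \<alpha>" "m - p - (m - k) = k - p"
    using assms by simp_all
  moreover have "(of_nat (m - p) gchoose (m - k)) = real ((m - p) choose (m - k))"
    by (simp add: binomial_gbinomial)
  ultimately show ?thesis
    using revision by (simp only: mult.commute)
qed

lemma gchoose_times_lag_coeff:
  assumes "p + j \<le> m"
  shows "((real m + \<alpha>) gchoose (m - (p + j))) * lag_coeff \<alpha> (p + j) p =
         (-1) ^ p / fact p * ((real m + \<alpha>) gchoose (m - p)) * real ((m - p) choose j)"
proof -
  have revision: "((real m + \<alpha>) gchoose (m - (p + j))) * ((real (p + j) + \<alpha>) gchoose (p + j - p)) =
      ((real m + \<alpha>) gchoose (m - p)) * real ((m - p) choose (m - (p + j)))"
    using assms by (intro gbinomial_laguerre_revision) auto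
  have "(m - p) choose (m - (p + j)) = (m - p) choose j"
    using assms by (metis binomial_symmetric diff_diff_left diff_le_mono le_add2 add_diff_cancel_left')
  with revision show ?thesis
    by (simp add: lag_coeff_def)
qed

lemma binomial_over_facts:
  assumes "d + s \<le> p"
  shows "real ((d + s) choose s) / (fact (p - (d + s)) * fact (d + s)) =
         real (p choose d) * real ((p - d) choose s) / fact p"
proof -
  let ?t = "d + s"
  have facts: "fact ?t * fact (p - ?t) * real (p choose ?t) = (fact p :: real)"
    using binomial_fact_lemma[of ?t p] assms by (metis of_nat_fact of_nat_mult)
  have mult: "real (p choose ?t) * real (?t choose d) = real (p choose d) * real ((p - d) choose s)"
    using choose_mult[of d ?t p] assms by (metis add_diff_cancel_left' le_add1 of_nat_mult)
  have symm: "?t choose s = ?t choose d"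
    by (metis add_diff_cancel_right' binomial_symmetric le_add2)
  have "real (p choose ?t) \<noteq> 0" using assms by simp
  then have "real (?t choose s) / (fact (p - ?t) * fact ?t) =
        real (p choose ?t) * real (?t choose d) / (fact ?t * fact (p - ?t) * real (p choose ?t))"
    using symm by (simp add: field_simps)
  then show ?thesis by (simp only: mult facts)
qed

lemma neg_one_power_square: "(-1::real) ^ p * (-1) ^ p = 1"
  by (metis power_add mult_2 power_minus1_even)

section \<open>Monomials in the Laguerre basis\<close>

lemma monom_laguerre_expansion:
  "monom 1 m =
   (\<Sum>k\<le>m. smult (fact m * (-1) ^ k * ((real m + \<alpha>) gchoose (m - k))) (laguerre k \<alpha>))"
  (is "_ = ?rhs")
proof (rule poly_eqI)
  fix p
  show "coeff (monom 1 m) p = coeff ?rhs p"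
  proof (cases "p \<le> m")
    case False
    then show ?thesis
      by (auto simp: coeff_sum coeff_laguerre intro!: sum.neutral)
  next
    case True
    let ?c = "fact m * ((real m + \<alpha>) gchoose (m - p)) / fact p"
    have "coeff ?rhs p = (\<Sum>k\<le>m. if p \<le> k then
            fact m * (-1) ^ k * ((real m + \<alpha>) gchoose (m - k)) * lag_coeff \<alpha> k p else 0)"
      by (auto simp: coeff_sum coeff_laguerre intro!: sum.cong)
    also have "\<dots> = (\<Sum>j\<le>m - p. fact m * (-1) ^ (p + j) *
            ((real m + \<alpha>) gchoose (m - (p + j))) * lag_coeff \<alpha> (p + j) p)"
      by (rule sum_atMost_from[OF True])
    also have "\<dots> = (\<Sum>j\<le>m - p. ?c * ((-1) ^ j * real ((m - p) choose j)))"
    proof (intro sum.cong refl)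
      fix j assume "j \<in> {..m - p}"
      then have "p + j \<le> m" using True by auto
      moreover have "(-1) ^ (p + j) * (-1) ^ p = ((-1) ^ j :: real)"
        by (simp add: power_add)
      ultimately show "fact m * (-1) ^ (p + j) * ((real m + \<alpha>) gchoose (m - (p + j))) *
            lag_coeff \<alpha> (p + j) p = ?c * ((-1) ^ j * real ((m - p) choose j))"
        by (simp only: mult.assoc gchoose_times_lag_coeff) (simp add: field_simps)
    qed
    also have "\<dots> = ?c * (if m - p = 0 then 1 else 0)"
      by (simp only: sum_distrib_left[symmetric] alternating_binomial_sum)
    finally show ?thesis
      using True by auto
  qed
qed

section \<open>The substitution \<open>p(x) \<mapsto> p(xy + x)\<close>\<close>

lemma pcompose_as_sum:
  "pcompose (P :: 'a::comm_ring_1 poly) Q = (\<Sum>k\<le>degree P. smult (coeff P k) (Q ^ k))"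
proof -
  have "degree (map_poly (\<lambda>x. [:x:]) P) = degree P"
    by (rule degree_map_poly) auto
  then show ?thesis
    unfolding pcompose_altdef poly_altdef
    by (intro sum.cong) (auto simp: coeff_map_poly)
qed

text \<open>\<open>(xy + x)^k = x^k (1 + y)^k\<close>, read off coefficientwise in \<open>y\<close>.\<close>
lemma coeff_power_xy_plus_x:
  "coeff ([: [:0, 1:], [:0, 1:] :] ^ k) r = smult (real (k choose r)) (monom (1::real) k)"
proof (cases "r \<le> k")
  case True
  have "[:0, 1::real:] ^ r * [:0, 1:] ^ (k - r) = [:0, 1:] ^ k"
    using True by (metis power_add le_add_diff_inverse)
  then show ?thesis using True
    by (simp add: coeff_linear_poly_power monom_altdef of_nat_poly mult.assoc)
next
  case False
  have "degree ([: [:0, 1:], [:0, 1::real:] :] ^ k) \<le> k"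
    using degree_power_le[of "[: [:0, 1:], [:0, 1::real:] :]" k] by simp
  then show ?thesis using False by (simp add: coeff_eq_0)
qed

lemma coeff_subst_xy_x:
  "coeff (coeff (subst_xy_x p) r) i = coeff p i * real (i choose r)"
proof -
  have "degree (map_poly (\<lambda>c. [:c:]) p) = degree p"
    by (rule degree_map_poly) auto
  then have "coeff (coeff (subst_xy_x p) r) i =
     (\<Sum>k\<le>degree p. coeff p k * real (k choose r) * (if k = i then 1 else 0))"
    unfolding subst_xy_x_def pcompose_as_sum coeff_sum
    by (intro sum.cong) (auto simp: coeff_map_poly coeff_power_xy_plus_x)
  also have "\<dots> = (if i \<le> degree p then coeff p i * real (i choose r) else 0)"
    by (simp add: mult.assoc if_distrib[where f="\<lambda>x. _ * x"] cong: if_cong)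
  finally show ?thesis
    by (simp add: coeff_eq_0)
qed

section \<open>The basis multipliers\<close>

text \<open>For fixed \<open>n\<close>, the multiplier \<open>L_k \<mapsto> (k choose n) L_k\<close> has symbol
  \<open>basis_symbol \<alpha> n\<close>; its \<open>m\<close>-th coefficient must be
  \<open>basis_image \<alpha> n m\<close>, i.e. \<open>(-1)^m/m!\<close> times the image of \<open>x^m\<close>.
  Both turn out to have the coefficients \<open>basis_coeff \<alpha> m n p\<close>.\<close>

definition basis_symbol :: "real \<Rightarrow> nat \<Rightarrow> real poly fps" where
  "basis_symbol \<alpha> n = exp_mxy * (fps_X ^ n * fps_of_poly (subst_xy_x (laguerre n \<alpha>)))"

definition basis_image :: "real \<Rightarrow> nat \<Rightarrow> nat \<Rightarrow> real poly" where
  "basis_image \<alpha> n m =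
     (\<Sum>k\<le>m. smult (real (k choose n) * (-1) ^ (m + k) * ((real m + \<alpha>) gchoose (m - k)))
                   (laguerre k \<alpha>))"

definition basis_coeff :: "real \<Rightarrow> nat \<Rightarrow> nat \<Rightarrow> nat \<Rightarrow> real" where
  "basis_coeff \<alpha> m n p =
     (if p \<le> m \<and> m \<le> n + p
      then (-1) ^ p / fact p * ((real m + \<alpha>) gchoose (m - p)) * real (p choose (n + p - m))
      else 0)"

text \<open>Coefficients of the image side: the Laguerre sum reduces to a finite difference of
  binomial coefficients, evaluated by \<open>alternating_binomial_shift\<close>.\<close>
lemma coeff_basis_image: "coeff (basis_image \<alpha> n m) p = basis_coeff \<alpha> m n p"
proof (cases "p \<le> m")
  case False
  then show ?thesis
    by (auto simp: basis_image_def coeff_sum coeff_laguerre basis_coeff_def intro!: sum.neutral)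
next
  case True
  define q where "q = m - p"
  have mq: "m = p + q" using True by (simp add: q_def)
  let ?c = "(-1) ^ p / fact p * ((real m + \<alpha>) gchoose (m - p)) * (-1) ^ q"
  have "coeff (basis_image \<alpha> n m) p = (\<Sum>k\<le>m. if p \<le> k then real (k choose n) * (-1) ^ (m + k) *
          ((real m + \<alpha>) gchoose (m - k)) * lag_coeff \<alpha> k p else 0)"
    by (auto simp: basis_image_def coeff_sum coeff_laguerre intro!: sum.cong)
  also have "\<dots> = (\<Sum>j\<le>q. real ((p + j) choose n) * (-1) ^ (m + (p + j)) *
          ((real m + \<alpha>) gchoose (m - (p + j))) * lag_coeff \<alpha> (p + j) p)"
    unfolding q_def by (rule sum_atMost_from[OF True])
  also have "\<dots> = (\<Sum>j\<le>q. ?c * ((-1) ^ j * real (q choose j) * real ((p + j) choose n)))"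
  proof (intro sum.cong refl)
    fix j assume "j \<in> {..q}"
    then have "p + j \<le> m" using mq by auto
    moreover have "(-1) ^ (m + (p + j)) * (-1) ^ p = ((-1) ^ p * (-1) ^ q * (-1) ^ j :: real)"
      using neg_one_power_square[of p] unfolding mq by (simp add: power_add mult_ac)
    ultimately show "real ((p + j) choose n) * (-1) ^ (m + (p + j)) *
          ((real m + \<alpha>) gchoose (m - (p + j))) * lag_coeff \<alpha> (p + j) p =
          ?c * ((-1) ^ j * real (q choose j) * real ((p + j) choose n))"
      by (simp only: mult.assoc gchoose_times_lag_coeff) (simp add: q_def field_simps)
  qed
  also have "\<dots> = ?c * (if q \<le> n then (-1) ^ q * real (p choose (n - q)) else 0)"
    by (simp only: sum_distrib_left[symmetric] alternating_binomial_shift)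
  also have "\<dots> = basis_coeff \<alpha> m n p"
    using neg_one_power_square[of q] mq by (auto simp: basis_coeff_def mult_ac)
  finally show ?thesis .
qed

lemma exp_mxy_nth: "exp_mxy $ i = monom ((-1) ^ i / fact i) i"
  by (simp add: exp_mxy_def smult_monom)

lemma coeff_basis_symbol_expanded:
  "coeff (basis_symbol \<alpha> n $ m) p =
     (\<Sum>i=0..m. if n \<le> m - i \<and> i \<le> p \<and> p - i \<le> n
                then (-1) ^ i / fact i * lag_coeff \<alpha> n (p - i) * real ((p - i) choose (m - i - n))
                else 0)"
  unfolding basis_symbol_def fps_mult_nth[of exp_mxy] coeff_sum
  by (intro sum.cong refl)
     (auto simp: exp_mxy_nth fps_X_power_mult_nth coeff_monom_mult coeff_subst_xy_x coeff_laguerre)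

lemma coeff_basis_symbol_degenerate:
  assumes "\<not> (p \<le> m \<and> n \<le> m \<and> m \<le> n + p)"
  shows "coeff (basis_symbol \<alpha> n $ m) p = basis_coeff \<alpha> m n p"
proof -
  have "coeff (basis_symbol \<alpha> n $ m) p = 0"
    unfolding coeff_basis_symbol_expanded
  proof (intro sum.neutral ballI)
    fix i assume i: "i \<in> {0..m}"
    show "(if n \<le> m - i \<and> i \<le> p \<and> p - i \<le> n then
       (-1) ^ i / fact i * lag_coeff \<alpha> n (p - i) * real ((p - i) choose (m - i - n)) else 0) = 0"
    proof (cases "n \<le> m - i \<and> i \<le> p \<and> p - i \<le> n")
      case True
      with assms i have "(p - i) choose (m - i - n) = 0" by (intro binomial_eq_0) auto
      then show ?thesis by simp
    qed auto
  qed
  moreover have "basis_coeff \<alpha> m n p = 0"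
  proof (cases "p \<le> m \<and> m \<le> n + p")
    case True
    with assms have "p choose (n + p - m) = 0" by (intro binomial_eq_0) auto
    then show ?thesis by (simp add: basis_coeff_def)
  qed (auto simp: basis_coeff_def)
  ultimately show ?thesis by simp
qed

text \<open>One summand of the Cauchy product for \<open>basis_symbol\<close>, reindexed by
  \<open>s = p - d - i\<close> where \<open>d = n + p - m\<close>; this turns it into a term of a
  Vandermonde convolution.\<close>
lemma basis_symbol_summand:
  assumes ds: "d + s \<le> p" "d + s \<le> n" and m: "m + d = n + p"
  shows "(-1) ^ (p - d - s) / fact (p - d - s) * lag_coeff \<alpha> n (p - (p - d - s)) *
           real ((p - (p - d - s)) choose (m - (p - d - s) - n)) =
         (-1) ^ p / fact p * real (p choose d) *
           (real ((p - d) choose s) * ((real n + \<alpha>) gchoose (n - d - s)))"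
proof -
  let ?i = "p - d - s"
  have indices: "p - ?i = d + s" "m - ?i - n = s" "n - (d + s) = n - d - s"
    using ds m by auto
  have "(-1) ^ ?i / fact ?i * lag_coeff \<alpha> n (p - ?i) * real ((p - ?i) choose (m - ?i - n)) =
        ((-1) ^ ?i * (-1) ^ (d + s)) * ((real n + \<alpha>) gchoose (n - d - s)) *
        (real ((d + s) choose s) / (fact (p - (d + s)) * fact (d + s)))"
    unfolding indices lag_coeff_def by (simp add: field_simps)
  also have "\<dots> = (-1) ^ p / fact p * real (p choose d) *
                     (real ((p - d) choose s) * ((real n + \<alpha>) gchoose (n - d - s)))"
  proof -
    have "(-1) ^ ?i * (-1) ^ (d + s) = ((-1) ^ p :: real)"
      using ds by (simp add: power_add[symmetric])
    then show ?thesis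
      using binomial_over_facts[OF ds(1)] by (simp add: field_simps)
  qed
  finally show ?thesis .
qed

text \<open>In the main range the Cauchy product collapses, after reindexing, to a
  Vandermonde convolution of generalized binomial coefficients.\<close>
lemma coeff_basis_symbol:
  "coeff (basis_symbol \<alpha> n $ m) p = basis_coeff \<alpha> m n p"
proof (cases "p \<le> m \<and> n \<le> m \<and> m \<le> n + p")
  case False
  then show ?thesis by (rule coeff_basis_symbol_degenerate)
next
  case True
  define d where "d = n + p - m"
  have dp: "d \<le> p" "d \<le> n" using True by (auto simp: d_def)
  let ?g = "\<lambda>i. (-1) ^ i / fact i * lag_coeff \<alpha> n (p - i) * real ((p - i) choose (m - i - n)) :: real"
  let ?G = "{i. i \<le> m \<and> n \<le> m - i \<and> i \<le> p \<and> p - i \<le> n}"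
  let ?H = "{s. s \<le> p - d \<and> s \<le> n - d}"
  let ?h = "\<lambda>s. (-1) ^ p / fact p * real (p choose d) *
                (real ((p - d) choose s) * ((real n + \<alpha>) gchoose (n - d - s)))"
  have term_eq: "?h s = ?g (p - d - s)" if "s \<in> ?H" for s
    using that dp True by (intro basis_symbol_summand[symmetric]) (auto simp: d_def)
  have "coeff (basis_symbol \<alpha> n $ m) p = (\<Sum>i\<in>?G. ?g i)"
    unfolding coeff_basis_symbol_expanded by (rule sum.mono_neutral_cong_right) auto
  also have "\<dots> = (\<Sum>s\<in>?H. ?h s)"
  proof (rule sum.reindex_bij_witness[where i="\<lambda>s. p - d - s" and j="\<lambda>i. p - d - i"])
    fix i assume i: "i \<in> ?G"
    show "p - d - (p - d - i) = i" "p - d - i \<in> ?H"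
      using i True by (auto simp: d_def)
    then show "?h (p - d - i) = ?g i"
      using term_eq[of "p - d - i"] by simp
  next
    fix s assume "s \<in> ?H"
    then show "p - d - (p - d - s) = s" "p - d - s \<in> ?G"
      using True by (auto simp: d_def)
  qed
  also have "\<dots> = (-1) ^ p / fact p * real (p choose d) *
       (\<Sum>s=0..n - d. (real (p - d) gchoose s) * ((real n + \<alpha>) gchoose (n - d - s)))"
    unfolding sum_distrib_left[symmetric]
    by (intro arg_cong[where f="\<lambda>x. _ * x"] sum.mono_neutral_cong_left)
       (auto simp: binomial_gbinomial[symmetric] binomial_eq_0)
  also have "\<dots> = (-1) ^ p / fact p * real (p choose d) * ((real (p - d) + (real n + \<alpha>)) gchoose (n - d))"
    by (simp only: gbinomial_Vandermonde)
  also have "\<dots> = basis_coeff \<alpha> m n p"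
  proof -
    have "real (p - d) + (real n + \<alpha>) = real m + \<alpha>" "n - d = m - p"
      using True dp by (auto simp: d_def)
    then show ?thesis using True by (simp add: basis_coeff_def d_def)
  qed
  finally show ?thesis .
qed

lemma basis_symbol_nth: "basis_symbol \<alpha> n $ m = basis_image \<alpha> n m"
  by (rule poly_eqI) (simp add: coeff_basis_symbol coeff_basis_image)

lemma basis_symbol_scaled_nth:
  "(exp_mxy * (fps_const [:c:] * fps_X ^ n * fps_of_poly (subst_xy_x (laguerre n \<alpha>)))) $ m =
   smult c (basis_image \<alpha> n m)"
proof -
  have "exp_mxy * (fps_const [:c:] * fps_X ^ n * fps_of_poly (subst_xy_x (laguerre n \<alpha>))) =
        fps_const [:c:] * basis_symbol \<alpha> n"
    by (simp add: basis_symbol_def mult_ac)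
  then show ?thesis
    by (simp only: fps_mult_left_const_nth basis_symbol_nth) simp
qed

lemma mult_fps_order_sum_nth:
  fixes f :: "nat \<Rightarrow> 'a::semiring_0 fps"
  assumes "\<And>n j. j < n \<Longrightarrow> f n $ j = 0"
  shows "(g * fps_order_sum f) $ m = (\<Sum>n\<le>m. (g * f n) $ m)"
proof -
  have "(g * fps_order_sum f) $ m = (\<Sum>i=0..m. g $ i * (\<Sum>n\<le>m - i. f n $ (m - i)))"
    by (simp add: fps_mult_nth fps_order_sum_def)
  also have "\<dots> = (\<Sum>i=0..m. \<Sum>n\<le>m. g $ i * f n $ (m - i))"
  proof (intro sum.cong refl)
    fix i assume "i \<in> {0..m}"
    have "(\<Sum>n\<le>m - i. f n $ (m - i)) = (\<Sum>n\<le>m. f n $ (m - i))"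
      by (intro sum.mono_neutral_left) (auto simp: assms)
    then show "g $ i * (\<Sum>n\<le>m - i. f n $ (m - i)) = (\<Sum>n\<le>m. g $ i * f n $ (m - i))"
      by (simp add: sum_distrib_left)
  qed
  also have "\<dots> = (\<Sum>n\<le>m. (g * f n) $ m)"
    by (subst sum.swap) (simp add: fps_mult_nth)
  finally show ?thesis .
qed

lemma smult_sum_right: "smult c (sum f A) = (\<Sum>x\<in>A. smult c (f x))"
  by (induction A rule: infinite_finite_induct) (auto simp: smult_add_right)

text \<open>The coefficients of the symbol of any operator that is diagonal in the
  Laguerre basis, by the inverse expansion of the monomials.\<close>
lemma symbol_nth_diagonal:
  fixes T :: "real poly \<Rightarrow> real poly"
  assumes add: "\<And>p q. T (p + q) = T p + T q"
    and scale: "\<And>c p. T (smult c p) = smult c (T p)"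
    and eigen: "\<And>n. T (laguerre n \<alpha>) = smult (lam n) (laguerre n \<alpha>)"
  shows "symbol T $ m =
    (\<Sum>k\<le>m. smult ((-1) ^ (m + k) * ((real m + \<alpha>) gchoose (m - k)) * lam k) (laguerre k \<alpha>))"
proof -
  have T_zero: "T 0 = 0" using scale[of 0 0] by simp
  have T_sum: "T (\<Sum>x\<in>A. f x) = (\<Sum>x\<in>A. T (f x))" if "finite A" for A :: "nat set" and f
    using that by (induction A rule: finite_induct) (auto simp: T_zero add)
  have "symbol T $ m = smult ((-1) ^ m / fact m) (T (monom 1 m))"
    by (simp add: symbol_def)
  also have "\<dots> = smult ((-1) ^ m / fact m)
      (\<Sum>k\<le>m. smult (fact m * (-1) ^ k * ((real m + \<alpha>) gchoose (m - k)) * lam k) (laguerre k \<alpha>))"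
    by (subst monom_laguerre_expansion[of m \<alpha>]) (simp add: T_sum scale eigen)
  finally show ?thesis
    unfolding smult_sum_right by (simp add: power_add mult_ac)
qed

theorem lemma2p2:
  fixes \<alpha> :: real and lam :: "nat \<Rightarrow> real" and T :: "real poly \<Rightarrow> real poly"
  assumes "\<alpha> > -1"
    and "\<And>p q. T (p + q) = T p + T q"
    and "\<And>c p. T (smult c p) = smult c (T p)"
    and "\<And>n. T (laguerre n \<alpha>) = smult (lam n) (laguerre n \<alpha>)"
  shows "symbol T =
    exp_mxy * fps_order_sum (\<lambda>n.
      fps_const [:\<Sum>k\<le>n. (-1) ^ (n - k) * real (n choose k) * lam k:] * fps_X ^ n
      * fps_of_poly (subst_xy_x (laguerre n \<alpha>)))"
proof (rule fps_ext)
  fix m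
  define a where "a n = (\<Sum>k\<le>n. (-1) ^ (n - k) * real (n choose k) * lam k)" for n
  have lam_inv: "lam k = (\<Sum>n\<le>m. real (k choose n) * a n)" if "k \<le> m" for k
  proof -
    have "(\<Sum>n\<le>m. real (k choose n) * a n) = (\<Sum>n\<le>k. real (k choose n) * a n)"
      using that by (intro sum.mono_neutral_right) auto
    then show ?thesis using binomial_inversion[of k lam] by (simp add: a_def)
  qed
  have "symbol T $ m =
    (\<Sum>k\<le>m. smult ((-1) ^ (m + k) * ((real m + \<alpha>) gchoose (m - k)) * lam k) (laguerre k \<alpha>))"
    using assms(2-4) by (rule symbol_nth_diagonal)
  also have "\<dots> = (\<Sum>n\<le>m. smult (a n) (basis_image \<alpha> n m))"
    unfolding basis_image_def smult_sum_right
    by (subst sum.swap) (simp add: lam_inv smult_sum sum_distrib_left sum_distrib_right mult_ac)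
  also have "\<dots> = (\<Sum>n\<le>m. (exp_mxy * (fps_const [:a n:] * fps_X ^ n *
                     fps_of_poly (subst_xy_x (laguerre n \<alpha>)))) $ m)"
    by (simp add: basis_symbol_scaled_nth)
  also have "\<dots> = (exp_mxy * fps_order_sum (\<lambda>n. fps_const [:a n:] * fps_X ^ n *
                     fps_of_poly (subst_xy_x (laguerre n \<alpha>)))) $ m"
    by (rule mult_fps_order_sum_nth[symmetric]) (simp add: mult.assoc fps_X_power_mult_nth)
  finally show "symbol T $ m = \<dots>"
    by (simp add: a_def)
qed

end
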